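(* Let $\Pi_n$ be the graph on $[n+1]$ with edge multiset $\{(i,i+1),(i,n+1): i=1,\ldots,n\}$ (so $(n,n+1)$ appears twice), and let ${\bf a}=(a_1,\ldots,a_n,-\sum a_i)$ with $a_i\in\mathbb{Z}_{>0}$. The number of types of cells of the canonical subdivision of $\mathcal{F}_{\Pi_n}({\bf a})$ is the Catalan number $C_n=\frac{1}{n+1}\binom{2n}{n}$.
   Context: $\mathcal{F}_H({\bf a})$ is the set of $f\in\mathbb{R}_{\ge0}^{E(H)}$ with outflow minus inflow at each vertex $k\le n$ equal to $a_k$. Noncrossing trees: for ordered lists $L=(x_1,\ldots,x_\ell)$, $R=(y_1,\ldots,y_r)$, $\mathcal{T}_{L,R}$ is the set of trees on $L\sqcup R$ with all edges between $L$ and $R$ and no two edges $(x_p,y_q),(x_t,y_u)$ with $p<t$, $q>u$. Compounded reduction at vertex $i\in\{2,\ldots,n\}$ of a graph $H$ in which $i$ has incoming edges (here $a_i>0$): with $\mathcal{I}_i(H)$, $\mathcal{O}_i(H)$ the multisets of edges $(\cdot,i)$, $(i,\cdot)$ in fixed orderings, $L=(\mathcal{I}_i(H),v_i)$ ($v_i$ a new symbol, last), $R=\mathcal{O}_i(H)$; for $T\in\mathcal{T}_{L,R}$, $H^{(i)}_T$ is $H$ with $\mathcal{I}_i(H)\cup\mathcal{O}_i(H)$ deleted and, for each tree edge, an edge $(r,s)$ added if it joins $(r,i)$ and $(i,s)$, or an edge $(i,s)$ if it joins $v_i$ and $(i,s)$. Each new edge is a formal sum of original edges (summands of the two joined edges,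 resp. of $(i,s)$), and $\mathcal{F}_H({\bf a})$ is identified with its image in the original edge space under $g\mapsto f$, $f(e)=\sum g(e')$ over edges $e'$ having $e$ as summand. Canonical compounded reduction tree: root the original graph; for $i=n,\ldots,2$ in order, every current leaf $H$ in which $i$ has incoming edges gets the children $H^{(i)}_T$, $T\in\mathcal{T}_{L,R}$. The canonical subdivision consists of the polytopes $\mathcal{F}_H({\bf a})$, one per leaf $H$ (the cells); two cells are of the same type if their leaf graphs are identical multigraphs. *)

theory Defs
  imports Complex_Main "HOL-Library.Multiset" "HOL-Library.Product_Lexorder"
begin

text \<open>Types of cells are determined by the leaf graphs as multigraphs, so we only
  track the multigraphs (not the formal-sum bookkeeping of edges).\<close>

type_synonym graph = "(nat \<times> nat) multiset"

definition incoming :: "graph \<Rightarrow> nat \<Rightarrow> graph" where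
  "incoming H i = filter_mset (\<lambda>e. snd e = i) H"

definition outgoing :: "graph \<Rightarrow> nat \<Rightarrow> graph" where
  "outgoing H i = filter_mset (\<lambda>e. fst e = i) H"

definition bip_rel :: "(nat \<times> nat) set \<Rightarrow> ((nat + nat) \<times> (nat + nat)) set" where
  "bip_rel T = {(Inl p, Inr q) | p q. (p, q) \<in> T} \<union> {(Inr q, Inl p) | p q. (p, q) \<in> T}"

definition is_bip_tree :: "nat \<Rightarrow> nat \<Rightarrow> (nat \<times> nat) set \<Rightarrow> bool" where
  "is_bip_tree l r T \<longleftrightarrow>
     T \<subseteq> {..<l} \<times> {..<r} \<and> card T + 1 = l + r \<and>
     (\<forall>u \<in> Inl ` {..<l} \<union> Inr ` {..<r}. \<forall>w \<in> Inl ` {..<l} \<union> Inr ` {..<r}.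
        (u, w) \<in> (bip_rel T)\<^sup>*)"

definition noncrossing_trees :: "nat \<Rightarrow> nat \<Rightarrow> (nat \<times> nat) set set" where
  "noncrossing_trees l r = {T. is_bip_tree l r T \<and>
     (\<forall>(p, q) \<in> T. \<forall>(t, u) \<in> T. \<not> (p < t \<and> q > u))}"

text \<open>Compounded reduction at vertex i along the noncrossing tree T.
  L = (incoming edges in sorted order, v_i), where v_i has index length Lin;
  R = outgoing edges in sorted order.\<close>

definition Lin :: "graph \<Rightarrow> nat \<Rightarrow> (nat \<times> nat) list" where
  "Lin H i = sorted_list_of_multiset (incoming H i)"

definition Rout :: "graph \<Rightarrow> nat \<Rightarrow> (nat \<times> nat) list" where
  "Rout H i = sorted_list_of_multiset (outgoing H i)"

definition reduce :: "graph \<Rightarrow> nat \<Rightarrow> (nat \<times> nat) set \<Rightarrow> graph" where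
  "reduce H i T =
     (H - incoming H i - outgoing H i) +
     sum (\<lambda>(p, q). {# (if p < length (Lin H i) then fst (Lin H i ! p) else i,
                        snd (Rout H i ! q)) #}) T"

definition children :: "graph \<Rightarrow> nat \<Rightarrow> graph set" where
  "children H i = reduce H i ` noncrossing_trees (length (Lin H i) + 1) (length (Rout H i))"

definition reduce_layer :: "nat \<Rightarrow> graph set \<Rightarrow> graph set" where
  "reduce_layer i S = (\<Union>H \<in> S. if incoming H i \<noteq> {#} \<and> children H i \<noteq> {}
                                then children H i else {H})"

fun reduce_down :: "nat \<Rightarrow> graph set \<Rightarrow> graph set" where
  "reduce_down 0 S = S"
| "reduce_down (Suc k) S = (if Suc k < 2 then S else reduce_down k (reduce_layer (Suc k) S))"

definition canonical_leaf_graphs :: "nat \<Rightarrow> graph \<Rightarrow> graph set" where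
  "canonical_leaf_graphs n G = reduce_down n {G}"

definition Pi_graph :: "nat \<Rightarrow> graph" where
  "Pi_graph n = mset (map (\<lambda>i. (i, i + 1)) [1..<n + 1]) + mset (map (\<lambda>i. (i, n + 1)) [1..<n + 1])"

end

theory Submission
  imports Defs
begin

(* Reducing at the vertices n, n - 1, ..., 2 keeps the graph in a simple family: a path
  1 -> 2 -> ... -> i together with c j parallel edges j -> n + 1 for every j.  At vertex i
  the incoming list is the single path edge and the outgoing list consists of c i copies of
  (i, n + 1), so a noncrossing tree only matters through the number t in {1..c i} of its
  c i + 1 edges that meet v_i: the child is the family member on the path up to i - 1 with
  c i replaced by t and c (i - 1) increased by c i + 1 - t.  Later reductions never touch the
  edges (i, n + 1), so different children have disjoint sets of leaves, and the number of
  leaves obeys the ballot recursion defining leaves below, started at x = 2 for the doubled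
  edge (n, n + 1).  Its closed form (x + 2m + 1 choose m + 1) - (x + 2m + 1 choose m) at x = 2 is the Catalan
  number. *)

fun leaves :: "nat \<Rightarrow> nat \<Rightarrow> nat" where
  "leaves 0 x = 1"
| "leaves (Suc m) x = (\<Sum>s = 2..x + 1. leaves m s)"

lemma leaves_Suc_Suc: "leaves (Suc m) (Suc x) = leaves (Suc m) x + leaves m (x + 2)"
  by simp

declare leaves.simps(2) [simp del]

lemma leaves_binomial:
  assumes "N = x + 2 * k + 1"
  shows "leaves (Suc k) x + (N choose k) = N choose Suc k"
  using assms
proof (induction k arbitrary: x N)
  case 0
  then show ?case by (simp add: leaves.simps(2))
next
  case (Suc k)
  note IH_k = Suc.IH
  from Suc.prems show ?case
  proof (induction x arbitrary: N)
    case 0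
    then have "N choose Suc (Suc k) = N choose Suc k"
      using binomial_symmetric[of "Suc (Suc k)" N] by (simp del: binomial_Suc_Suc)
    then show ?case
      by (simp add: leaves.simps(2))
  next
    case (Suc x)
    define M where "M = x + 2 * k + 3"
    have "leaves (Suc k) (x + 2) + (M choose k) = M choose Suc k"
      by (rule IH_k) (simp add: M_def)
    moreover have "leaves (Suc (Suc k)) x + (M choose Suc k) = M choose Suc (Suc k)"
      by (rule Suc.IH) (simp add: M_def)
    moreover have "N = Suc M"
      using Suc.prems by (simp add: M_def)
    ultimately show ?case
      by (simp add: leaves_Suc_Suc)
  qed
qed

lemma leaves_catalan: "leaves n 2 * (n + 2) = 2 * n + 2 choose (n + 1)"
proof (cases n)
  case 0
  then show ?thesis by simp
next
  case (Suc k)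
  define M where "M = 2 * k + 3"
  have split: "leaves (Suc k) 2 + (M choose k) = M choose Suc k"
    by (rule leaves_binomial) (simp add: M_def)
  have "Suc (k + Suc (Suc k)) = M"
    by (simp add: M_def)
  then have absorb: "(k + 3) * (M choose k) = (k + 1) * (M choose Suc k)"
    using Suc_times_binomial_add[of k "Suc (Suc k)"] by (simp add: algebra_simps del: binomial_Suc_Suc)
  have "leaves (Suc k) 2 * (k + 3) + (k + 1) * (M choose Suc k) = (k + 3) * (M choose Suc k)"
    using arg_cong[OF split, of "\<lambda>m. (k + 3) * m"] absorb by (simp add: algebra_simps)
  then have "leaves (Suc k) 2 * (k + 3) = 2 * (M choose Suc k)"
    by (simp add: algebra_simps)
  also have "\<dots> = Suc M choose Suc (Suc k)"
  proof -
    have "M choose Suc (Suc k) = M choose Suc k"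
      using binomial_symmetric[of "Suc (Suc k)" M] by (simp add: M_def del: binomial_Suc_Suc)
    then show ?thesis by simp
  qed
  finally show ?thesis
    using Suc by (simp add: M_def numeral_eq_Suc)
qed

definition path_fan :: "nat \<Rightarrow> nat \<Rightarrow> (nat \<Rightarrow> nat) \<Rightarrow> graph" where
  "path_fan n i c =
     mset (map (\<lambda>j. (j, j + 1)) [1..<i]) + (\<Sum>j \<in> {1..n}. replicate_mset (c j) (j, n + 1))"

lemma count_path_fan:
  "count (path_fan n i c) (a, b) =
     (if b = a + 1 \<and> 1 \<le> a \<and> a < i then 1 else 0) + (if b = n + 1 \<and> 1 \<le> a \<and> a \<le> n then c a else 0)"
proof -
  have "distinct (map (\<lambda>j. (j, j + 1)) [1..<i])"
    by (simp add: distinct_map inj_on_def)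
  then show ?thesis
    unfolding path_fan_def distinct_count_atmost_1 by (auto simp: count_sum)
qed

lemma Pi_graph_eq_path_fan: "Pi_graph n = path_fan n n (\<lambda>j. if j = n then 2 else 1)"
proof -
  have "distinct (map (\<lambda>j. (j, j + 1)) [1..<n + 1])" "distinct (map (\<lambda>j. (j, n + 1)) [1..<n + 1])"
    by (simp_all add: distinct_map inj_on_def)
  then show ?thesis
    unfolding multiset_eq_iff Pi_graph_def distinct_count_atmost_1
    by (auto simp: count_path_fan)
qed

lemma incoming_path_fan: "2 \<le> i \<Longrightarrow> i \<le> n \<Longrightarrow> incoming (path_fan n i c) i = {#(i - 1, i)#}"
  by (auto simp: multiset_eq_iff incoming_def count_path_fan)

lemma outgoing_path_fan: "1 \<le> i \<Longrightarrow> i \<le> n \<Longrightarrow> outgoing (path_fan n i c) i = replicate_mset (c i) (i, n + 1)"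
  by (auto simp: multiset_eq_iff outgoing_def count_path_fan)

lemma path_fan_minus_incident:
  "2 \<le> i \<Longrightarrow> i \<le> n \<Longrightarrow>
   path_fan n i c - incoming (path_fan n i c) i - outgoing (path_fan n i c) i = path_fan n (i - 1) (c(i := 0))"
  by (auto simp: multiset_eq_iff incoming_def outgoing_def count_path_fan)

lemma Lin_path_fan: "2 \<le> i \<Longrightarrow> i \<le> n \<Longrightarrow> Lin (path_fan n i c) i = [(i - 1, i)]"
  by (simp add: Lin_def incoming_path_fan)

lemma Rout_path_fan: "1 \<le> i \<Longrightarrow> i \<le> n \<Longrightarrow> Rout (path_fan n i c) i = replicate (c i) (i, n + 1)"
  by (simp add: Rout_def outgoing_path_fan flip: mset_replicate)

lemma count_sum_singletons: "finite T \<Longrightarrow> count (\<Sum>x \<in> T. {#f x#}) e = card {x \<in> T. f x = e}"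
  by (simp add: count_sum sum.If_cases Int_def conj_commute)

lemma reduce_path_fan:
  assumes i: "2 \<le> i" "i \<le> n" and T: "T \<subseteq> {..<2} \<times> {..<c i}"
  shows "reduce (path_fan n i c) i T =
    path_fan n (i - 1) (c(i := card {x \<in> T. fst x \<noteq> 0}, i - 1 := c (i - 1) + card {x \<in> T. fst x = 0}))"
proof -
  let ?e = "\<lambda>x. (if fst x = 0 then i - 1 else i, n + 1)"
  have fin: "finite T"
    using T finite_subset by blast
  have new_edges: "(\<Sum>(p, q) \<in> T. {#(if p < length (Lin (path_fan n i c) i)
        then fst (Lin (path_fan n i c) i ! p) else i, snd (Rout (path_fan n i c) i ! q))#})
      = (\<Sum>x \<in> T. {#?e x#})"
    using T i by (intro sum.cong) (auto simp: Lin_path_fan Rout_path_fan)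
  have "{x \<in> T. ?e x = (a, b)} =
      (if b = n + 1 \<and> a = i - 1 then {x \<in> T. fst x = 0}
       else if b = n + 1 \<and> a = i then {x \<in> T. fst x \<noteq> 0} else {})" for a b
    using i by auto
  then show ?thesis
    unfolding reduce_def path_fan_minus_incident[OF i] new_edges multiset_eq_iff
    using i by (auto simp: count_sum_singletons[OF fin] count_path_fan)
qed

lemma bip_tree_left_has_edge:
  assumes T: "is_bip_tree l r T" and "0 < r" "p < l"
  shows "\<exists>q. (p, q) \<in> T"
proof -
  have "(Inr 0, Inl p) \<in> (bip_rel T)\<^sup>*"
    using T assms(2,3) unfolding is_bip_tree_def by blast
  then show ?thesis
    by (cases rule: rtranclE) (auto simp: bip_rel_def)
qed

lemma bip_tree_two_left_degrees:
  assumes T: "is_bip_tree 2 r T" and r: "0 < r"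
  shows "1 \<le> card {x \<in> T. fst x = 0}" "1 \<le> card {x \<in> T. fst x \<noteq> 0}"
    and "card {x \<in> T. fst x = 0} + card {x \<in> T. fst x \<noteq> 0} = r + 1"
proof -
  have fin: "finite T"
    using T finite_subset unfolding is_bip_tree_def by blast
  obtain q q' where "(0, q) \<in> T" "(1, q') \<in> T"
    using bip_tree_left_has_edge[OF T r] by fastforce
  then have "{x \<in> T. fst x = 0} \<noteq> {}" "{x \<in> T. fst x \<noteq> 0} \<noteq> {}"
    by force+
  then show "1 \<le> card {x \<in> T. fst x = 0}" "1 \<le> card {x \<in> T. fst x \<noteq> 0}"
    using fin by (simp_all add: Suc_le_eq card_gt_0_iff)
  have "card {x \<in> T. fst x = 0} + card {x \<in> T. fst x \<noteq> 0} = card T"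
    using fin by (subst card_Un_disjoint[symmetric]) (auto intro: arg_cong[where f = card])
  then show "card {x \<in> T. fst x = 0} + card {x \<in> T. fst x \<noteq> 0} = r + 1"
    using T unfolding is_bip_tree_def by simp
qed

definition split_tree :: "nat \<Rightarrow> nat \<Rightarrow> (nat \<times> nat) set" where
  "split_tree a r = Pair 0 ` {..<a} \<union> Pair 1 ` {a - 1..<r}"

lemma split_tree_left_degrees:
  assumes "1 \<le> a"
  shows "card {x \<in> split_tree a r. fst x = 0} = a" "card {x \<in> split_tree a r. fst x \<noteq> 0} = r + 1 - a"
proof -
  have "{x \<in> split_tree a r. fst x = 0} = Pair 0 ` {..<a}"
    "{x \<in> split_tree a r. fst x \<noteq> 0} = Pair 1 ` {a - 1..<r}"
    unfolding split_tree_def by auto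
  then show "card {x \<in> split_tree a r. fst x = 0} = a" "card {x \<in> split_tree a r. fst x \<noteq> 0} = r + 1 - a"
    using assms by (simp_all add: card_image inj_on_def)
qed

lemma split_tree_noncrossing:
  assumes a: "1 \<le> a" "a \<le> r"
  shows "split_tree a r \<in> noncrossing_trees 2 r"
proof -
  let ?T = "split_tree a r"
  let ?R = "(bip_rel ?T)\<^sup>*"
  let ?V = "Inl ` {..<2} \<union> Inr ` {..<r}"
  have card: "card ?T + 1 = 2 + r"
  proof -
    have "card ?T = card {x \<in> ?T. fst x = 0} + card {x \<in> ?T. fst x \<noteq> 0}"
      by (subst card_Un_disjoint[symmetric]) (auto simp: split_tree_def intro: arg_cong[where f = card])
    then show ?thesis
      using split_tree_left_degrees[OF a(1)] a by simp
  qed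
  have edge: "(Inl p, Inr q) \<in> ?R" "(Inr q, Inl p) \<in> ?R" if "(p, q) \<in> ?T" for p q
    using that unfolding bip_rel_def by blast+
  have sym: "sym ?R"
    by (rule sym_rtrancl) (auto simp: sym_def bip_rel_def)
  have to_left: "(Inr q, Inl (if q < a then 0 else 1)) \<in> ?R" if "q < r" for q
    using that by (intro edge(2)) (auto simp: split_tree_def)
  have from_left: "(Inl p, Inr (a - 1)) \<in> ?R" if "p < 2" for p
    using that a by (intro edge(1)) (auto simp: split_tree_def less_2_cases_iff)
  have hub: "(u, Inr (a - 1)) \<in> ?R" if "u \<in> ?V" for u
  proof -
    have "(Inr q, Inr (a - 1)) \<in> ?R" if "q < r" for q
      using to_left[OF that] from_left[of "if q < a then 0 else 1"] by (simp add: rtrancl_trans)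
    then show ?thesis
      using that from_left by auto
  qed
  have "is_bip_tree 2 r ?T"
    unfolding is_bip_tree_def
  proof (intro conjI ballI)
    show "?T \<subseteq> {..<2} \<times> {..<r}"
      using a by (auto simp: split_tree_def)
    show "card ?T + 1 = 2 + r"
      by (rule card)
    show "(u, w) \<in> ?R" if "u \<in> ?V" "w \<in> ?V" for u w
      using hub[OF that(1)] hub[OF that(2)] sym by (meson rtrancl_trans symD)
  qed
  moreover have "\<not> (p < t \<and> u < q)" if "(p, q) \<in> ?T" "(t, u) \<in> ?T" for p q t u
    using that by (auto simp: split_tree_def)
  ultimately show ?thesis
    unfolding noncrossing_trees_def by blast
qed

definition split_fan :: "(nat \<Rightarrow> nat) \<Rightarrow> nat \<Rightarrow> nat \<Rightarrow> nat \<Rightarrow> nat" where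
  "split_fan c i t = c(i := t, i - 1 := c (i - 1) + (c i + 1 - t))"

lemma children_path_fan:
  assumes i: "2 \<le> i" "i \<le> n" and ci: "1 \<le> c i"
  shows "children (path_fan n i c) i = (\<lambda>t. path_fan n (i - 1) (split_fan c i t)) ` {1..c i}"
proof -
  have children: "children (path_fan n i c) i = reduce (path_fan n i c) i ` noncrossing_trees 2 (c i)"
    using i by (simp add: children_def Lin_path_fan Rout_path_fan numeral_2_eq_2)
  have reduce: "reduce (path_fan n i c) i T = path_fan n (i - 1) (split_fan c i t)"
    if "T \<in> noncrossing_trees 2 (c i)" "card {x \<in> T. fst x \<noteq> 0} = t"
      "card {x \<in> T. fst x = 0} = c i + 1 - t" for T t
  proof -
    have "T \<subseteq> {..<2} \<times> {..<c i}"
      using that(1) by (simp add: noncrossing_trees_def is_bip_tree_def)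
    then show ?thesis
      using that(2,3) by (simp add: reduce_path_fan[OF i] split_fan_def)
  qed
  show ?thesis
    unfolding children
  proof (intro equalityI subsetI)
    fix H assume "H \<in> reduce (path_fan n i c) i ` noncrossing_trees 2 (c i)"
    then obtain T where T: "T \<in> noncrossing_trees 2 (c i)" and H: "H = reduce (path_fan n i c) i T"
      by blast
    have "is_bip_tree 2 (c i) T" "0 < c i"
      using T ci by (simp_all add: noncrossing_trees_def)
    note degrees = bip_tree_two_left_degrees[OF this]
    have "H = path_fan n (i - 1) (split_fan c i (card {x \<in> T. fst x \<noteq> 0}))"
      unfolding H using degrees(3) by (intro reduce[OF T refl]) simp
    moreover have "card {x \<in> T. fst x \<noteq> 0} \<in> {1..c i}"
      using degrees ci by auto
    ultimately show "H \<in> (\<lambda>t. path_fan n (i - 1) (split_fan c i t)) ` {1..c i}"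
      by (rule image_eqI)
  next
    fix H assume "H \<in> (\<lambda>t. path_fan n (i - 1) (split_fan c i t)) ` {1..c i}"
    then obtain t where t: "t \<in> {1..c i}" and H: "H = path_fan n (i - 1) (split_fan c i t)"
      by blast
    define a where "a = c i + 1 - t"
    have a: "1 \<le> a" "a \<le> c i"
      using t by (auto simp: a_def)
    note degrees = split_tree_left_degrees[OF a(1), of "c i"]
    have "H = reduce (path_fan n i c) i (split_tree a (c i))"
      unfolding H by (rule reduce[OF split_tree_noncrossing[OF a], symmetric]) (use t degrees in \<open>auto simp: a_def\<close>)
    then show "H \<in> reduce (path_fan n i c) i ` noncrossing_trees 2 (c i)"
      using split_tree_noncrossing[OF a] by (rule image_eqI)
  qed
qed

lemma reduce_layer_UN: "reduce_layer i S = (\<Union>H \<in> S. reduce_layer i {H})"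
  unfolding reduce_layer_def by auto

lemma reduce_down_UN: "reduce_down k S = (\<Union>H \<in> S. reduce_down k {H})"
proof (induction k arbitrary: S)
  case (Suc k)
  show ?case
  proof (cases "Suc k < 2")
    case False
    then have "reduce_down (Suc k) S = reduce_down k (\<Union>H \<in> S. reduce_layer (Suc k) {H})"
      by (simp flip: reduce_layer_UN)
    also have "\<dots> = (\<Union>H \<in> S. \<Union>H' \<in> reduce_layer (Suc k) {H}. reduce_down k {H'})"
      by (subst Suc.IH) simp
    also have "\<dots> = (\<Union>H \<in> S. reduce_down k (reduce_layer (Suc k) {H}))"
      by (rule SUP_cong[OF refl]) (rule Suc.IH[symmetric])
    also have "\<dots> = (\<Union>H \<in> S. reduce_down (Suc k) {H})"
      using False by simp
    finally show ?thesis .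
  qed simp
qed simp

lemma reduce_down_path_fan:
  assumes i: "2 \<le> i" "i \<le> n" and ci: "1 \<le> c i"
  shows "reduce_down i {path_fan n i c} =
    (\<Union>t \<in> {1..c i}. reduce_down (i - 1) {path_fan n (i - 1) (split_fan c i t)})"
proof -
  have "incoming (path_fan n i c) i \<noteq> {#}" "children (path_fan n i c) i \<noteq> {}"
    using incoming_path_fan[OF i] children_path_fan[of i n c, OF i ci] ci by auto
  then have layer: "reduce_layer i {path_fan n i c} = (\<lambda>t. path_fan n (i - 1) (split_fan c i t)) ` {1..c i}"
    unfolding reduce_layer_def using children_path_fan[of i n c, OF i ci] by simp
  obtain k where k: "i = Suc k"
    using i by (cases i) auto
  have "reduce_down i {path_fan n i c} = reduce_down (i - 1) (reduce_layer i {path_fan n i c})"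
    using i unfolding k by simp
  also have "\<dots> = (\<Union>t \<in> {1..c i}. reduce_down (i - 1) {path_fan n (i - 1) (split_fan c i t)})"
    unfolding layer by (subst reduce_down_UN) simp
  finally show ?thesis .
qed

lemma reduce_down_Suc_0 [simp]: "reduce_down (Suc 0) S = S"
  by simp

declare reduce_down.simps(2) [simp del]

lemma split_fan_pos:
  assumes "\<forall>j \<in> {1..n}. 1 \<le> c j" "1 \<le> t"
  shows "\<forall>j \<in> {1..n}. 1 \<le> split_fan c i t j"
  using assms by (auto simp: split_fan_def)

lemma count_reduce_down_path_fan:
  assumes "Suc k \<le> n" "\<forall>j \<in> {1..n}. 1 \<le> c j"
    and "H \<in> reduce_down (Suc k) {path_fan n (Suc k) c}" "Suc k < j" "j \<le> n"
  shows "count H (j, n + 1) = c j"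
  using assms
proof (induction k arbitrary: c H)
  case 0
  then show ?case by (simp add: count_path_fan)
next
  case (Suc k)
  obtain t where t: "t \<in> {1..c (Suc (Suc k))}"
    and H: "H \<in> reduce_down (Suc k) {path_fan n (Suc k) (split_fan c (Suc (Suc k)) t)}"
    using Suc.prems reduce_down_path_fan[of "Suc (Suc k)" n c] by auto
  have "count H (j, n + 1) = split_fan c (Suc (Suc k)) t j"
    using Suc.prems t split_fan_pos by (intro Suc.IH[OF _ _ H]) auto
  then show ?case
    using Suc.prems by (simp add: split_fan_def)
qed

lemma finite_reduce_down_path_fan:
  assumes "Suc k \<le> n" "\<forall>j \<in> {1..n}. 1 \<le> c j"
  shows "finite (reduce_down (Suc k) {path_fan n (Suc k) c})"
  using assms
proof (induction k arbitrary: c)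
  case (Suc k)
  then show ?case
    using split_fan_pos by (simp add: reduce_down_path_fan[of "Suc (Suc k)" n c])
qed simp

lemma card_reduce_down_path_fan:
  assumes "Suc k \<le> n" "\<forall>j \<in> {1..n}. 1 \<le> c j" "\<forall>j \<in> {1..k}. c j = 1"
  shows "card (reduce_down (Suc k) {path_fan n (Suc k) c}) = leaves k (c (Suc k))"
  using assms
proof (induction k arbitrary: c)
  case 0
  then show ?case by simp
next
  case (Suc k)
  define i where "i = Suc (Suc k)"
  let ?leaves = "\<lambda>t. reduce_down (Suc k) {path_fan n (Suc k) (split_fan c i t)}"
  have pos: "\<forall>j \<in> {1..n}. 1 \<le> split_fan c i t j" if "t \<in> {1..c i}" for t
    using Suc.prems that split_fan_pos by auto
  have card: "card (?leaves t) = leaves k (c i + 2 - t)" if "t \<in> {1..c i}" for t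
  proof -
    have "split_fan c i t (Suc k) = c i + 2 - t"
      using Suc.prems that by (simp add: split_fan_def i_def Suc_diff_le)
    moreover have "\<forall>j \<in> {1..k}. split_fan c i t j = 1"
      using Suc.prems by (simp add: split_fan_def i_def)
    ultimately show ?thesis
      using Suc.IH[of "split_fan c i t"] Suc.prems pos[OF that] by (simp add: i_def)
  qed
  have disjoint: "?leaves t \<inter> ?leaves t' = {}" if "t \<in> {1..c i}" "t' \<in> {1..c i}" "t \<noteq> t'" for t t'
  proof -
    have "count H (i, n + 1) = s" if "s \<in> {1..c i}" "H \<in> ?leaves s" for H s
    proof -
      have "count H (i, n + 1) = split_fan c i s i"
        using Suc.prems pos that by (intro count_reduce_down_path_fan) (auto simp: i_def)
      then show ?thesis
        by (simp add: split_fan_def i_def)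
    qed
    then show ?thesis
      using that by blast
  qed
  have "card (reduce_down i {path_fan n i c}) = (\<Sum>t \<in> {1..c i}. card (?leaves t))"
    using Suc.prems pos disjoint
    by (simp add: reduce_down_path_fan card_UN_disjoint finite_reduce_down_path_fan i_def)
  also have "\<dots> = (\<Sum>t \<in> {1..c i}. leaves k (c i + 2 - t))"
    using card by simp
  also have "\<dots> = (\<Sum>s \<in> {2..c i + 1}. leaves k s)"
    by (rule sum.reindex_bij_witness[where i = "\<lambda>s. c i + 2 - s" and j = "\<lambda>t. c i + 2 - t"]) auto
  finally show ?case
    by (simp add: leaves.simps(2) i_def)
qed

theorem corollary6p3:
  fixes n :: nat and a :: "nat \<Rightarrow> int"
  assumes "n \<ge> 1"
    and "\<forall>i \<in> {1..n}. a i > 0"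
  shows "real (card (canonical_leaf_graphs n (Pi_graph n))) = real ((2 * n) choose n) / real (n + 1)"
proof -
  \<comment> \<open>the flow vector \<open>a\<close> does not enter the leaf graphs\<close>
  obtain k where n: "n = Suc k"
    using assms(1) by (cases n) auto
  have "card (canonical_leaf_graphs n (Pi_graph n)) = leaves k 2"
    using card_reduce_down_path_fan[of k n "\<lambda>j. if j = n then 2 else 1"]
    by (simp add: canonical_leaf_graphs_def Pi_graph_eq_path_fan n)
  moreover have "leaves k 2 * (n + 1) = (2 * n) choose n"
    using leaves_catalan[of k] by (simp add: n)
  ultimately show ?thesis
    by (simp add: field_simps flip: of_nat_mult)
qed

end
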